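(* For every real $\beta$ and all $t\in\mathbb{R}$: $L=M(t)+V(t)=R(t)+S(t)+V(t)$; the operators $M(t),L,V(t),R(t),S(t)$ are self-adjoint and pairwise commute; $M(t)$ and $V(t)$ have only nonnegative eigenvalues. Moreover, for $t>0$ the operators $b(t),M(t),L,V(t)$ all have the same kernel.
   Context: Let $G$ be a finite simple graph. For $k\ge0$ let $\Omega_k$ be the space of complex-valued functions on the (oriented) $k$-simplices of $G$ (complete subgraphs with $k+1$ vertices), $\Omega=\bigoplus_k\Omega_k$. The exterior derivative $d_0:\Omega_k\to\Omega_{k+1}$ is $(d_0f)(x_0,\dots,x_{k+1})=\sum_{j}(-1)^jf(x_0,\dots,\hat x_j,\dots,x_{k+1})$, $D_0=d_0+d_0^*$, $L=D_0^2$. For a self-adjoint operator $D$ on $\Omega$ whose blocks $\Omega_k\to\Omega_j$ vanish unless $|j-k|\le1$, write $D=d+d^*+b$ with $d$ the blocks $\Omega_k\to\Omega_{k+1}$ and $b$ the block-diagonal part. The Dirac deformation with real parameter $\beta$ is the solution $D(t)$ of $D'=BD-DB$, $D(0)=D_0$, with $B(t)=d(t)-d(t)^*+i\beta b(t)$, $D(t)=d(t)+d(t)^*+b(t)$ (the solution exists for all real $t$ and keeps this form). Set $C(t)=d(t)+d(t)^*$, $M(t)=C(t)^2$, $V(t)=b(t)^2$, $R(t)=d(t)d(t)^*$, $S(t)=d(t)^*d(t)$. *)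

theory Defs
  imports "HOL-Analysis.Analysis"
begin

text \<open>Vertices carry a linear order, used to fix the orientation of each simplex
(an oriented simplex is identified with its increasingly ordered vertex list).\<close>

definition finite_simple_graph :: "'a set \<Rightarrow> ('a \<Rightarrow> 'a \<Rightarrow> bool) \<Rightarrow> bool" where
  "finite_simple_graph V E \<longleftrightarrow> finite V \<and> (\<forall>u v. E u v \<longrightarrow> u \<in> V \<and> v \<in> V)
     \<and> (\<forall>u v. E u v \<longrightarrow> E v u) \<and> (\<forall>u. \<not> E u u)"

text \<open>Simplices = complete subgraphs (nonempty vertex sets, pairwise adjacent).
A k-simplex has card k+1.\<close>
definition simplices :: "'a set \<Rightarrow> ('a \<Rightarrow> 'a \<Rightarrow> bool) \<Rightarrow> 'a set set" where
  "simplices V E = {x. x \<subseteq> V \<and> x \<noteq> {} \<and> (\<forall>u\<in>x. \<forall>v\<in>x. u \<noteq> v \<longrightarrow> E u v)}"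

text \<open>Operators on \<Omega> are matrices indexed by simplices; vectors are functions on
simplices vanishing outside S.\<close>
type_synonym 'a op = "'a set \<Rightarrow> 'a set \<Rightarrow> complex"

definition vecs :: "'a set set \<Rightarrow> ('a set \<Rightarrow> complex) set" where
  "vecs S = {f. \<forall>x. x \<notin> S \<longrightarrow> f x = 0}"

definition mmul :: "'a set set \<Rightarrow> 'a op \<Rightarrow> 'a op \<Rightarrow> 'a op" where
  "mmul S A B = (\<lambda>x y. if x \<in> S \<and> y \<in> S then (\<Sum>z\<in>S. A x z * B z y) else 0)"

definition mvec :: "'a set set \<Rightarrow> 'a op \<Rightarrow> ('a set \<Rightarrow> complex) \<Rightarrow> ('a set \<Rightarrow> complex)" where
  "mvec S A f = (\<lambda>x. if x \<in> S then (\<Sum>y\<in>S. A x y * f y) else 0)"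

definition adj :: "'a op \<Rightarrow> 'a op" where
  "adj A = (\<lambda>x y. cnj (A y x))"

definition madd :: "'a op \<Rightarrow> 'a op \<Rightarrow> 'a op" where
  "madd A B = (\<lambda>x y. A x y + B x y)"

definition msub :: "'a op \<Rightarrow> 'a op \<Rightarrow> 'a op" where
  "msub A B = (\<lambda>x y. A x y - B x y)"

definition mscale :: "complex \<Rightarrow> 'a op \<Rightarrow> 'a op" where
  "mscale c A = (\<lambda>x y. c * A x y)"

text \<open>Exterior derivative d_0 : entry (x,y) with x a (k+1)-simplex and y a k-simplex,
y = x with its j-th vertex (in increasing order) removed, equals (-1)^j.\<close>
definition ext_d :: "'a::linorder set set \<Rightarrow> 'a op" where
  "ext_d S = (\<lambda>x y. if x \<in> S \<and> y \<in> S \<and> y \<subseteq> x \<and> card x = card y + 1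
       then (\<Sum>w\<in>x - y. (-1) ^ card {v\<in>x. v < w}) else 0)"

definition dirac0 :: "'a::linorder set set \<Rightarrow> 'a op" where
  "dirac0 S = madd (ext_d S) (adj (ext_d S))"

definition dpart :: "'a op \<Rightarrow> 'a op" where
  "dpart A = (\<lambda>x y. if card x = card y + 1 then A x y else 0)"

definition bpart :: "'a op \<Rightarrow> 'a op" where
  "bpart A = (\<lambda>x y. if card x = card y then A x y else 0)"

definition self_adjoint :: "'a op \<Rightarrow> bool" where
  "self_adjoint A \<longleftrightarrow> adj A = A"

definition eigenvalue :: "'a set set \<Rightarrow> 'a op \<Rightarrow> complex \<Rightarrow> bool" where
  "eigenvalue S A c \<longleftrightarrow> (\<exists>f\<in>vecs S. f \<noteq> (\<lambda>_. 0) \<and> mvec S A f = (\<lambda>x. c * f x))"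

definition kernel :: "'a set set \<Rightarrow> 'a op \<Rightarrow> ('a set \<Rightarrow> complex) set" where
  "kernel S A = {f\<in>vecs S. mvec S A f = (\<lambda>_. 0)}"

definition laxB :: "real \<Rightarrow> 'a op \<Rightarrow> 'a op" where
  "laxB \<beta> D = madd (msub (dpart D) (adj (dpart D))) (mscale (\<i> * complex_of_real \<beta>) (bpart D))"

definition dirac_deformation :: "'a::linorder set set \<Rightarrow> real \<Rightarrow> (real \<Rightarrow> 'a op) \<Rightarrow> bool" where
  "dirac_deformation S \<beta> D \<longleftrightarrow> D 0 = dirac0 S \<and>
     (\<forall>t x y. ((\<lambda>s. D s x y) has_vector_derivative
        (msub (mmul S (laxB \<beta> (D t)) (D t)) (mmul S (D t) (laxB \<beta> (D t)))) x y) (at t))"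

end

theory Submission
  imports Defs
begin

text \<open>The Lax flow keeps \<open>D\<close> self-adjoint and tridiagonal, and in terms of \<open>D = d + d\<^sup>* + b\<close> it
  reads \<open>d' = (1 - i\<beta>)(d b - b d)\<close>, \<open>b' = 2(d d\<^sup>* - d\<^sup>* d)\<close>. Hence \<open>d\<^sup>2\<close> and \<open>d b + b d\<close> solve
  linear equations and vanish at \<open>t = 0\<close>, so they vanish for all \<open>t\<close>. With these relations
  \<open>(D\<^sup>2)' = 0\<close>, so \<open>D(t)\<^sup>2 = L\<close>, and expanding \<open>D\<^sup>2 = d d\<^sup>* + d\<^sup>* d + b\<^sup>2\<close> gives the identities and
  the commutation relations. Moreover \<open>R' = -4 b R\<close> and \<open>S' = 4 b S\<close>, so the kernels of \<open>R(t)\<close> and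
  \<open>S(t)\<close>, and hence of \<open>M(t)\<close>, do not depend on \<open>t\<close>; at \<open>t = 0\<close> we have \<open>M = L\<close>.
  Finally let \<open>t > 0\<close> and \<open>b(t) f = 0\<close>. If \<open>g = R(t) f \<noteq> 0\<close>, the form \<open>\<langle>g, b(s) g\<rangle>\<close> vanishes at
  \<open>s = 0\<close> and \<open>s = t\<close>, but its derivative \<open>2 |d(s)\<^sup>* g|\<^sup>2\<close> is positive for all \<open>s\<close>; the same
  argument applies to \<open>S(t) f\<close>. So \<open>ker b(t) \<subseteq> ker M(t)\<close>, and the converse inclusions follow
  from \<open>L = M + V\<close> with both summands nonnegative.\<close>

section \<open>Matrices indexed by simplices\<close>

definition mzero :: "'a op" where
  "mzero = (\<lambda>x y. 0)"

lemma mmul_madd_left: "mmul S (madd A B) C = madd (mmul S A C) (mmul S B C)"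
  by (auto simp: mmul_def madd_def fun_eq_iff sum.distrib algebra_simps)

lemma mmul_madd_right: "mmul S C (madd A B) = madd (mmul S C A) (mmul S C B)"
  by (auto simp: mmul_def madd_def fun_eq_iff sum.distrib algebra_simps)

lemma mmul_msub_left: "mmul S (msub A B) C = msub (mmul S A C) (mmul S B C)"
  by (auto simp: mmul_def msub_def fun_eq_iff sum_subtractf algebra_simps)

lemma mmul_msub_right: "mmul S C (msub A B) = msub (mmul S C A) (mmul S C B)"
  by (auto simp: mmul_def msub_def fun_eq_iff sum_subtractf algebra_simps)

lemma mmul_mscale_left: "mmul S (mscale c A) B = mscale c (mmul S A B)"
  by (auto simp: mmul_def mscale_def fun_eq_iff sum_distrib_left algebra_simps)

lemma mmul_mscale_right: "mmul S B (mscale c A) = mscale c (mmul S B A)"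
  by (auto simp: mmul_def mscale_def fun_eq_iff sum_distrib_left algebra_simps)

lemmas mmul_distribs =
  mmul_madd_left mmul_madd_right mmul_msub_left mmul_msub_right mmul_mscale_left mmul_mscale_right

lemma mmul_mzero_left [simp]: "mmul S mzero A = mzero"
  by (auto simp: mmul_def mzero_def fun_eq_iff)

lemma mmul_mzero_right [simp]: "mmul S A mzero = mzero"
  by (auto simp: mmul_def mzero_def fun_eq_iff)

lemma mmul_assoc: "finite S \<Longrightarrow> mmul S (mmul S A B) C = mmul S A (mmul S B C)"
  by (auto simp: mmul_def fun_eq_iff sum_distrib_left sum_distrib_right algebra_simps intro: sum.swap)

lemma mmul_eq_mzeroI:
  assumes "\<And>x y. x \<in> S \<Longrightarrow> y \<in> S \<Longrightarrow> mmul S A B x y = 0"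
  shows "mmul S A B = mzero"
  using assms by (auto simp: fun_eq_iff mzero_def mmul_def)

lemma madd_mzero [simp]: "madd mzero A = A" "madd A mzero = A"
  by (simp_all add: madd_def mzero_def fun_eq_iff)

lemma msub_mzero [simp]: "msub A mzero = A" "msub mzero A = mscale (-1) A"
  by (simp_all add: msub_def mscale_def mzero_def fun_eq_iff)

lemma mscale_mzero [simp]: "mscale c mzero = mzero"
  by (simp add: mscale_def mzero_def fun_eq_iff)

lemma mscale_one [simp]: "mscale 1 A = A"
  by (simp add: mscale_def fun_eq_iff)

lemma mscale_mscale [simp]: "mscale a (mscale b A) = mscale (a * b) A"
  by (simp add: mscale_def fun_eq_iff)

lemma madd_eq_mzero_iff: "madd A B = mzero \<longleftrightarrow> A = mscale (-1) B"
  by (auto simp: madd_def mscale_def mzero_def fun_eq_iff eq_neg_iff_add_eq_0)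

lemma adj_adj [simp]: "adj (adj A) = A"
  by (simp add: adj_def fun_eq_iff)

lemma adj_mzero [simp]: "adj mzero = mzero"
  by (simp add: adj_def mzero_def fun_eq_iff)

lemma adj_mmul: "adj (mmul S A B) = mmul S (adj B) (adj A)"
  by (auto simp: mmul_def adj_def fun_eq_iff algebra_simps)

lemma adj_madd: "adj (madd A B) = madd (adj A) (adj B)"
  by (simp add: adj_def madd_def fun_eq_iff)

lemma adj_msub: "adj (msub A B) = msub (adj A) (adj B)"
  by (simp add: adj_def msub_def fun_eq_iff)

lemma adj_mscale: "adj (mscale c A) = mscale (cnj c) (adj A)"
  by (simp add: adj_def mscale_def fun_eq_iff)

lemma self_adjoint_madd_adj: "self_adjoint (madd A (adj A))"
  unfolding self_adjoint_def adj_madd by (simp add: madd_def fun_eq_iff add.commute)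

lemma mvec_mmul: "mvec S (mmul S A B) f = mvec S A (mvec S B f)"
  by (auto simp: mvec_def mmul_def fun_eq_iff sum_distrib_left sum_distrib_right algebra_simps
      intro: sum.swap)

lemma mvec_madd: "mvec S (madd A B) f = (\<lambda>x. mvec S A f x + mvec S B f x)"
  by (auto simp: mvec_def madd_def sum.distrib algebra_simps fun_eq_iff)

lemma mvec_msub: "mvec S (msub A B) f = (\<lambda>x. mvec S A f x - mvec S B f x)"
  by (auto simp: mvec_def msub_def sum_subtractf algebra_simps fun_eq_iff)

lemma mvec_mscale: "mvec S (mscale c A) f = (\<lambda>x. c * mvec S A f x)"
  by (auto simp: mvec_def mscale_def sum_distrib_left algebra_simps fun_eq_iff)

lemma mvec_zero [simp]: "mvec S A (\<lambda>_. 0) = (\<lambda>_. 0)"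
  by (simp add: mvec_def fun_eq_iff)

lemma mvec_mzero [simp]: "mvec S mzero f = (\<lambda>_. 0)"
  by (simp add: mvec_def mzero_def fun_eq_iff)

lemma mvec_in_vecs: "mvec S A f \<in> vecs S"
  by (simp add: mvec_def vecs_def)

section \<open>Uniqueness for linear equations\<close>

lemma gronwall_forward_zero:
  fixes n n' :: "real \<Rightarrow> real"
  assumes der: "\<And>s. (n has_real_derivative n' s) (at s)"
    and bound: "\<And>s. s \<in> {\<tau>..t} \<Longrightarrow> n' s \<le> K * n s"
    and nonneg: "\<And>s. 0 \<le> n s" and start: "n \<tau> = 0" and "\<tau> \<le> t"
  shows "n t = 0"
proof -
  define h where "h s = n s * exp (- K * s)" for s
  have "h t \<le> h \<tau>"
  proof (rule DERIV_nonpos_imp_nonincreasing[OF \<open>\<tau> \<le> t\<close>])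
    fix s assume "\<tau> \<le> s" "s \<le> t"
    then have "(n' s - K * n s) * exp (- K * s) \<le> 0"
      using bound[of s] by (simp add: mult_nonpos_nonneg)
    moreover have "(h has_real_derivative (n' s - K * n s) * exp (- K * s)) (at s)"
      unfolding h_def by (auto intro!: derivative_eq_intros der simp: algebra_simps)
    ultimately show "\<exists>y. (h has_real_derivative y) (at s) \<and> y \<le> 0" by blast
  qed
  then have "n t * exp (- K * t) \<le> 0" by (simp add: h_def start)
  then show ?thesis using nonneg[of t] by (simp add: mult_le_0_iff)
qed

lemma gronwall_zero:
  fixes n n' :: "real \<Rightarrow> real"
  assumes der: "\<And>s. (n has_real_derivative n' s) (at s)"
    and bound: "\<And>s. s \<in> {a..b} \<Longrightarrow> \<bar>n' s\<bar> \<le> K * n s"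
    and nonneg: "\<And>s. 0 \<le> n s" and "\<tau> \<in> {a..b}" "n \<tau> = 0" and "t \<in> {a..b}"
  shows "n t = 0"
proof (cases "\<tau> \<le> t")
  case True
  show ?thesis
    by (rule gronwall_forward_zero[where K=K, OF der _ nonneg \<open>n \<tau> = 0\<close> True])
       (use bound \<open>\<tau> \<in> {a..b}\<close> \<open>t \<in> {a..b}\<close> in \<open>fastforce simp: abs_le_iff\<close>)
next
  case False
  \<comment> \<open>Run time backwards.\<close>
  have "((\<lambda>u. n (- u)) has_real_derivative - n' (- u)) (at u)" for u
    using DERIV_chain2[OF der DERIV_minus[OF DERIV_ident]] by simp
  from gronwall_forward_zero[OF this, of "- \<tau>" "- t" K] False
  show ?thesis
    using bound \<open>\<tau> \<in> {a..b}\<close> \<open>t \<in> {a..b}\<close> nonneg \<open>n \<tau> = 0\<close> by (fastforce simp: abs_le_iff)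
qed

lemma has_real_derivative_cmod_square:
  assumes "(f has_vector_derivative f') (at s)"
  shows "((\<lambda>s. (cmod (f s))\<^sup>2) has_real_derivative 2 * Re (cnj (f s) * f')) (at s)"
proof -
  have "((\<lambda>s. Re (f s)) has_real_derivative Re f') (at s)"
    and "((\<lambda>s. Im (f s)) has_real_derivative Im f') (at s)"
    using assms by (simp_all add: has_vector_derivative_complex_iff)
  from DERIV_add[OF DERIV_mult[OF this(1,1)] DERIV_mult[OF this(2,2)]]
  have "((\<lambda>s. (Re (f s))\<^sup>2 + (Im (f s))\<^sup>2) has_real_derivative
      2 * (Re (f s) * Re f' + Im (f s) * Im f')) (at s)"
    by (simp add: power2_eq_square algebra_simps)
  then show ?thesis unfolding cmod_power2 by simp
qed

text \<open>The energy \<open>\<Sum>i. \<bar>E s i\<bar>\<^sup>2\<close> has derivative bounded by \<open>2 K |I|\<close> times itself.\<close>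
lemma gronwall_vanishing:
  fixes E E' :: "real \<Rightarrow> 'i \<Rightarrow> complex"
  assumes fin: "finite I"
    and der: "\<And>s i. i \<in> I \<Longrightarrow> ((\<lambda>s. E s i) has_vector_derivative E' s i) (at s)"
    and bound: "\<And>s i. s \<in> {a..b} \<Longrightarrow> i \<in> I \<Longrightarrow> cmod (E' s i) \<le> K * (\<Sum>j\<in>I. cmod (E s j))"
    and "0 \<le> K" and "\<tau> \<in> {a..b}" and start: "\<And>i. i \<in> I \<Longrightarrow> E \<tau> i = 0"
    and "t \<in> {a..b}" and "i \<in> I"
  shows "E t i = 0"
proof -
  define n where "n s = (\<Sum>i\<in>I. (cmod (E s i))\<^sup>2)" for s
  define n' where "n' s = (\<Sum>i\<in>I. 2 * Re (cnj (E s i) * E' s i))" for s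
  have "(n has_real_derivative n' s) (at s)" for s
    unfolding n_def n'_def by (intro DERIV_sum has_real_derivative_cmod_square der)
  moreover have "\<bar>n' s\<bar> \<le> (2 * K * card I) * n s" if "s \<in> {a..b}" for s
  proof -
    have "\<bar>n' s\<bar> \<le> (\<Sum>i\<in>I. 2 * (cmod (E s i) * cmod (E' s i)))"
      unfolding n'_def
    proof (rule order_trans[OF sum_abs], rule sum_mono)
      fix i
      show "\<bar>2 * Re (cnj (E s i) * E' s i)\<bar> \<le> 2 * (cmod (E s i) * cmod (E' s i))"
        using abs_Re_le_cmod[of "cnj (E s i) * E' s i"]
        by (simp only: abs_mult norm_mult complex_mod_cnj abs_numeral)
    qed
    also have "\<dots> \<le> (\<Sum>i\<in>I. 2 * (cmod (E s i) * (K * (\<Sum>j\<in>I. cmod (E s j)))))"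
      using bound[OF that] by (intro sum_mono mult_left_mono) auto
    also have "\<dots> = 2 * K * (\<Sum>j\<in>I. cmod (E s j))\<^sup>2"
      by (simp add: sum_distrib_left sum_distrib_right power2_eq_square algebra_simps)
    also have "\<dots> \<le> 2 * K * (n s * card I)"
      unfolding n_def using \<open>0 \<le> K\<close> by (intro mult_left_mono sum_squared_le_sum_of_squares) auto
    finally show ?thesis by (simp add: algebra_simps)
  qed
  moreover have "0 \<le> n s" for s
    unfolding n_def by (simp add: sum_nonneg)
  moreover have "n \<tau> = 0" by (simp add: n_def start)
  ultimately have "n t = 0"
    using gronwall_zero[of n n' a b "2 * K * card I" \<tau> t] \<open>\<tau> \<in> {a..b}\<close> \<open>t \<in> {a..b}\<close>
    by blast
  then show ?thesis
    using sum_nonneg_eq_0_iff[OF fin, of "\<lambda>i. (cmod (E t i))\<^sup>2"] \<open>i \<in> I\<close> by (simp add: n_def)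
qed

lemma continuous_entries_bounded:
  fixes B :: "real \<Rightarrow> 'a op"
  assumes fin: "finite S" and cont: "\<And>x y. continuous_on {a..b} (\<lambda>s. B s x y)"
  shows "\<exists>K\<ge>0. \<forall>s\<in>{a..b}. \<forall>x\<in>S. \<forall>y\<in>S. cmod (B s x y) \<le> K"
proof (cases "a \<le> b")
  case True
  define N where "N s = (\<Sum>j\<in>S \<times> S. cmod (B s (fst j) (snd j)))" for s
  have "continuous_on {a..b} N"
    unfolding N_def by (intro continuous_intros continuous_on_norm cont)
  then obtain m where "\<forall>s\<in>{a..b}. N s \<le> N m"
    using continuous_attains_sup[of "{a..b}" N] True by auto
  moreover have "cmod (B s x y) \<le> N s" if "x \<in> S" "y \<in> S" for s x y
    using member_le_sum[of "(x, y)" "S \<times> S" "\<lambda>j. cmod (B s (fst j) (snd j))"] that fin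
    by (simp add: N_def)
  moreover have "0 \<le> N m" unfolding N_def by (simp add: sum_nonneg)
  ultimately show ?thesis by (meson order_trans)
qed auto

lemma norm_mmul_le:
  fixes a b :: real
  assumes "\<And>p q. p \<in> S \<Longrightarrow> q \<in> S \<Longrightarrow> cmod (A p q) \<le> a"
    and "\<And>p q. p \<in> S \<Longrightarrow> q \<in> S \<Longrightarrow> cmod (B p q) \<le> b"
    and "0 \<le> a" "0 \<le> b"
  shows "cmod (mmul S A B x y) \<le> real (card S) * a * b"
proof (cases "x \<in> S \<and> y \<in> S")
  case True
  then have "cmod (mmul S A B x y) \<le> (\<Sum>z\<in>S. cmod (A x z) * cmod (B z y))"
    using norm_sum[of "\<lambda>z. A x z * B z y" S] by (simp add: mmul_def norm_mult)
  also have "\<dots> \<le> (\<Sum>z\<in>S. a * b)"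
    using True assms by (intro sum_mono mult_mono) auto
  finally show ?thesis by simp
qed (use assms in \<open>auto simp: mmul_def\<close>)

lemma has_vector_derivative_mmul:
  assumes "\<And>x y. ((\<lambda>s. A s x y) has_vector_derivative A' x y) (at t)"
    and "\<And>x y. ((\<lambda>s. B s x y) has_vector_derivative B' x y) (at t)"
  shows "((\<lambda>s. mmul S (A s) (B s) x y) has_vector_derivative
    madd (mmul S A' (B t)) (mmul S (A t) B') x y) (at t)"
proof (cases "x \<in> S \<and> y \<in> S")
  case True
  have "((\<lambda>s. \<Sum>z\<in>S. A s x z * B s z y) has_vector_derivative
      (\<Sum>z\<in>S. A t x z * B' z y + A' x z * B t z y)) (at t)"
    by (intro has_vector_derivative_sum has_vector_derivative_mult assms)
  then show ?thesis using True by (simp add: mmul_def madd_def sum.distrib algebra_simps)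
qed (auto simp: mmul_def madd_def)

lemma has_vector_derivative_madd:
  assumes "((\<lambda>s. A s x y) has_vector_derivative A' x y) (at t)"
    and "((\<lambda>s. B s x y) has_vector_derivative B' x y) (at t)"
  shows "((\<lambda>s. madd (A s) (B s) x y) has_vector_derivative madd A' B' x y) (at t)"
  using assms by (simp add: madd_def has_vector_derivative_add)

lemma linear_matrix_ode_vanishing:
  fixes X P Q :: "real \<Rightarrow> 'a op"
  assumes fin: "finite S"
    and der: "\<And>s x y. ((\<lambda>s. X s x y) has_vector_derivative
      madd (mmul S (X s) (P s)) (mmul S (Q s) (X s)) x y) (at s)"
    and cont_P: "\<And>x y. continuous_on UNIV (\<lambda>s. P s x y)"
    and cont_Q: "\<And>x y. continuous_on UNIV (\<lambda>s. Q s x y)"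
    and start: "\<And>x y. x \<in> S \<Longrightarrow> y \<in> S \<Longrightarrow> X \<tau> x y = 0"
    and "x \<in> S" "y \<in> S"
  shows "X t x y = 0"
proof -
  define a where "a = min \<tau> t"
  define b where "b = max \<tau> t"
  have cont_ab: "\<And>x y. continuous_on {a..b} (\<lambda>s. P s x y)" "\<And>x y. continuous_on {a..b} (\<lambda>s. Q s x y)"
    using cont_P cont_Q continuous_on_subset by blast+
  obtain KP where "KP \<ge> 0"
    and KP: "\<And>s p q. s \<in> {a..b} \<Longrightarrow> p \<in> S \<Longrightarrow> q \<in> S \<Longrightarrow> cmod (P s p q) \<le> KP"
    using continuous_entries_bounded[where B = P, OF fin cont_ab(1)] by blast
  obtain KQ where "KQ \<ge> 0"
    and KQ: "\<And>s p q. s \<in> {a..b} \<Longrightarrow> p \<in> S \<Longrightarrow> q \<in> S \<Longrightarrow> cmod (Q s p q) \<le> KQ"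
    using continuous_entries_bounded[where B = Q, OF fin cont_ab(2)] by blast
  define E where "E s j = X s (fst j) (snd j)" for s j
  define E' where "E' s j = madd (mmul S (X s) (P s)) (mmul S (Q s) (X s)) (fst j) (snd j)" for s j
  define K where "K = card S * (KP + KQ)"
  have bound: "cmod (E' s j) \<le> K * (\<Sum>i\<in>S \<times> S. cmod (E s i))" if "s \<in> {a..b}" for s j
  proof -
    define nE where "nE = (\<Sum>i\<in>S \<times> S. cmod (E s i))"
    have X_le: "cmod (X s p q) \<le> nE" if "p \<in> S" "q \<in> S" for p q
      using member_le_sum[of "(p, q)" "S \<times> S" "\<lambda>i. cmod (E s i)"] that fin
      by (simp add: nE_def E_def)
    have "0 \<le> nE" unfolding nE_def by (simp add: sum_nonneg)
    have "cmod (mmul S (X s) (P s) p q) \<le> card S * nE * KP" for p q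
      by (rule norm_mmul_le) (use X_le KP[OF that] \<open>0 \<le> nE\<close> \<open>KP \<ge> 0\<close> in auto)
    moreover have "cmod (mmul S (Q s) (X s) p q) \<le> card S * KQ * nE" for p q
      by (rule norm_mmul_le) (use X_le KQ[OF that] \<open>0 \<le> nE\<close> \<open>KQ \<ge> 0\<close> in auto)
    ultimately have "cmod (E' s j) \<le> card S * nE * KP + card S * KQ * nE"
      unfolding E'_def madd_def by (meson add_mono norm_triangle_ineq order_trans)
    then show ?thesis by (simp add: nE_def K_def algebra_simps)
  qed
  have "E t (x, y) = 0"
  proof (rule gronwall_vanishing[where E' = E' and K = K and a = a and b = b and \<tau> = \<tau>])
    show "finite (S \<times> S)" using fin by simp
    show "((\<lambda>s. E s j) has_vector_derivative E' s j) (at s)" if "j \<in> S \<times> S" for s j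
      unfolding E_def E'_def by (rule der)
    show "0 \<le> K" using \<open>KP \<ge> 0\<close> \<open>KQ \<ge> 0\<close> by (simp add: K_def)
    show "E \<tau> j = 0" if "j \<in> S \<times> S" for j
      using start that by (auto simp: E_def)
  qed (use bound \<open>x \<in> S\<close> \<open>y \<in> S\<close> in \<open>auto simp: a_def b_def\<close>)
  then show ?thesis by (simp add: E_def)
qed

text \<open>The matrix \<open>A t F\<close>, each of whose columns is \<open>A t f\<close>, solves \<open>X' = Q X\<close>.\<close>
lemma linear_flow_kernel_invariant:
  fixes A Q :: "real \<Rightarrow> 'a op"
  assumes fin: "finite S"
    and der: "\<And>s x y. ((\<lambda>s. A s x y) has_vector_derivative mmul S (Q s) (A s) x y) (at s)"
    and cont_Q: "\<And>x y. continuous_on UNIV (\<lambda>s. Q s x y)"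
    and "mvec S (A t1) f = (\<lambda>_. 0)"
  shows "mvec S (A t2) f = (\<lambda>_. 0)"
proof
  fix x
  define F :: "'a op" where "F z y = f z" for z y
  define G where "G s = mmul S (A s) F" for s
  have mvec_G: "mvec S (A s) f x = G s x x" if "x \<in> S" for s x
    using that by (simp add: mvec_def mmul_def G_def F_def)
  have der_G: "((\<lambda>s. G s x y) has_vector_derivative
      madd (mmul S (G s) mzero) (mmul S (Q s) (G s)) x y) (at s)" for s x y
  proof -
    have "((\<lambda>s. G s x y) has_vector_derivative
        madd (mmul S (mmul S (Q s) (A s)) F) (mmul S (A s) mzero) x y) (at s)"
      unfolding G_def by (rule has_vector_derivative_mmul) (simp_all add: der mzero_def)
    then show ?thesis by (simp add: G_def mmul_assoc[OF fin])
  qed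
  have start_G: "G t1 x y = 0" if "x \<in> S" "y \<in> S" for x y
    using that fun_cong[OF \<open>mvec S (A t1) f = (\<lambda>_. 0)\<close>, of x] by (simp add: G_def F_def mmul_def mvec_def)
  have G_t2: "G t2 x x = 0" if "x \<in> S"
    by (rule linear_matrix_ode_vanishing[OF fin der_G _ cont_Q start_G that that]) (simp add: mzero_def)
  show "mvec S (A t2) f x = 0"
  proof (cases "x \<in> S")
    case True
    then show ?thesis by (simp only: mvec_G G_t2)
  qed (simp add: mvec_def)
qed

section \<open>Operators of Dirac form and the Lax field\<close>

definition dirac_form :: "'a set set \<Rightarrow> 'a op \<Rightarrow> bool" where
  "dirac_form S A \<longleftrightarrow> self_adjoint A \<and>
     (\<forall>x y. A x y \<noteq> 0 \<longrightarrow> x \<in> S \<and> y \<in> S \<and> (card x = card y + 1 \<or> card y = card x + 1 \<or> card x = card y))"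

lemma dirac_form_outside: "dirac_form S A \<Longrightarrow> x \<notin> S \<or> y \<notin> S \<Longrightarrow> A x y = 0"
  by (auto simp: dirac_form_def)

lemma dirac_form_off_band:
  "dirac_form S A \<Longrightarrow> card x \<noteq> card y + 1 \<Longrightarrow> card y \<noteq> card x + 1 \<Longrightarrow> card x \<noteq> card y \<Longrightarrow> A x y = 0"
  by (auto simp: dirac_form_def)

lemma dirac_form_cnj: "dirac_form S A \<Longrightarrow> A y x = cnj (A x y)"
  unfolding dirac_form_def self_adjoint_def by (metis adj_def complex_cnj_cnj)

lemma dirac_form_decompose: "dirac_form S A \<Longrightarrow> A = madd (madd (dpart A) (adj (dpart A))) (bpart A)"
  by (intro ext, frule dirac_form_cnj)
     (auto simp: madd_def dpart_def bpart_def adj_def dest: dirac_form_off_band)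

lemma dirac_form_bpart_self_adjoint:
  assumes "dirac_form S A"
  shows "adj (bpart A) = bpart A"
proof (intro ext)
  fix x y
  show "adj (bpart A) x y = bpart A x y"
    using dirac_form_cnj[OF assms, of y x] by (simp add: adj_def bpart_def)
qed

lemma dirac_form_dirac0: "dirac_form S (dirac0 S)"
proof -
  have "self_adjoint (dirac0 S)"
    by (simp add: self_adjoint_def dirac0_def adj_def madd_def fun_eq_iff add.commute)
  then show ?thesis
    by (auto simp: dirac_form_def dirac0_def adj_def madd_def ext_d_def)
qed

definition dirac_part :: "'a set set \<Rightarrow> 'a op \<Rightarrow> 'a op" where
  "dirac_part S A = (\<lambda>x y. if x \<in> S \<and> y \<in> S \<and> (card x = card y + 1 \<or> card y = card x + 1 \<or> card x = card y)
      then (A x y + cnj (A y x)) / 2 else 0)"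

lemma dirac_form_dirac_part: "dirac_form S (dirac_part S A)"
  by (auto simp: dirac_form_def self_adjoint_def dirac_part_def adj_def fun_eq_iff add.commute)

lemma dirac_part_eq:
  assumes "dirac_form S A"
  shows "dirac_part S A = A"
proof (intro ext)
  fix x y
  show "dirac_part S A x y = A x y"
    using dirac_form_cnj[OF assms, of y x] dirac_form_outside[OF assms, of x y]
      dirac_form_off_band[OF assms, of x y]
    by (auto simp: dirac_part_def)
qed

lemma dirac_part_msub: "dirac_part S (msub A B) = msub (dirac_part S A) (dirac_part S B)"
  by (auto simp: dirac_part_def msub_def fun_eq_iff field_simps)

lemma norm_dirac_part_le: "cmod (dirac_part S A x y) \<le> (cmod (A x y) + cmod (A y x)) / 2"
proof -
  have "cmod ((A x y + cnj (A y x)) / 2) \<le> (cmod (A x y) + cmod (A y x)) / 2"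
    by (simp add: norm_divide) (metis complex_mod_cnj norm_triangle_ineq)
  then show ?thesis by (auto simp: dirac_part_def)
qed

definition lax_field :: "'a set set \<Rightarrow> real \<Rightarrow> 'a op \<Rightarrow> 'a op" where
  "lax_field S \<beta> A = msub (mmul S (laxB \<beta> A) A) (mmul S A (laxB \<beta> A))"

lemma laxB_entry: "laxB \<beta> A x z =
    (if card x = card z + 1 then A x z else 0) - cnj (if card z = card x + 1 then A z x else 0)
    + \<i> * of_real \<beta> * (if card x = card z then A x z else 0)"
  by (simp add: laxB_def madd_def msub_def mscale_def dpart_def bpart_def adj_def)

lemma laxB_msub: "laxB \<beta> (msub A B) = msub (laxB \<beta> A) (laxB \<beta> B)"
  by (auto simp: laxB_def msub_def madd_def mscale_def dpart_def bpart_def adj_def fun_eq_iff algebra_simps)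

lemma laxB_skew:
  assumes "dirac_form S A"
  shows "cnj (laxB \<beta> A y z) = - laxB \<beta> A z y"
  using dirac_form_cnj[OF assms, of y z] dirac_form_cnj[OF assms, of z y] by (auto simp: laxB_entry)

lemma lax_field_entry: "lax_field S \<beta> A x y =
    (if x \<in> S \<and> y \<in> S then (\<Sum>z\<in>S. laxB \<beta> A x z * A z y - A x z * laxB \<beta> A z y) else 0)"
  by (simp add: lax_field_def msub_def mmul_def sum_subtractf)

lemma lax_term_off_band:
  assumes A: "dirac_form S A" and "card x \<noteq> card y + 1" "card y \<noteq> card x + 1" "card x \<noteq> card y"
  shows "laxB \<beta> A x z * A z y - A x z * laxB \<beta> A z y = 0"
proof -
  consider "card x = card z + 1" | "card z = card x" | "card z = card x + 1"
    | "card x \<noteq> card z + 1" "card z \<noteq> card x" "card z \<noteq> card x + 1" by linarith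
  then show ?thesis
  proof cases
    case 1 then show ?thesis using assms dirac_form_off_band[OF A, of z y] dirac_form_cnj[OF A, of y z]
      by (cases "card z = card y + 1") (auto simp: laxB_entry)
  next
    case 2 then show ?thesis using assms dirac_form_off_band[OF A, of z y] by (simp add: laxB_entry)
  next
    case 3 then show ?thesis
      using assms dirac_form_off_band[OF A, of z y] dirac_form_cnj[OF A, of x z] dirac_form_cnj[OF A, of y z]
      by (cases "card y = card z + 1") (auto simp: laxB_entry)
  next
    case 4 then show ?thesis using assms dirac_form_off_band[OF A, of x z] by (simp add: laxB_entry)
  qed
qed

lemma lax_term_dpart:
  assumes A: "dirac_form S A" and c: "card x = card y + 1"
  shows "laxB \<beta> A x z * A z y - A x z * laxB \<beta> A z y =
    (1 - \<i> * of_real \<beta>) * (dpart A x z * bpart A z y - bpart A x z * dpart A z y)"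
proof -
  consider "card z = card y" | "card z = card y + 1" | "card z = card y + 2"
    | "card z \<noteq> card y" "card z \<noteq> card y + 1" "card z \<noteq> card y + 2" by linarith
  then show ?thesis
  proof cases
    case 3 then show ?thesis using c dirac_form_off_band[OF A, of z y]
      by (simp add: laxB_entry dpart_def bpart_def)
  next
    case 4 then show ?thesis using c dirac_form_off_band[OF A, of z y] dirac_form_off_band[OF A, of x z]
      by (simp add: laxB_entry dpart_def bpart_def)
  qed (use c in \<open>simp_all add: laxB_entry dpart_def bpart_def algebra_simps\<close>)
qed

lemma lax_term_bpart:
  assumes A: "dirac_form S A" and c: "card x = card y"
  shows "laxB \<beta> A x z * A z y - A x z * laxB \<beta> A z y =
    2 * (dpart A x z * adj (dpart A) z y - adj (dpart A) x z * dpart A z y)"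
proof -
  consider "card y = card z + 1" | "card z = card y" | "card z = card y + 1"
    | "card y \<noteq> card z + 1" "card z \<noteq> card y" "card z \<noteq> card y + 1" by linarith
  then show ?thesis
  proof cases
    case 1 then show ?thesis using c dirac_form_cnj[OF A, of z y] dirac_form_cnj[OF A, of z x]
      by (simp add: laxB_entry dpart_def adj_def algebra_simps)
  next
    case 2 then show ?thesis using c by (simp add: laxB_entry dpart_def adj_def algebra_simps)
  next
    case 3 then show ?thesis using c dirac_form_cnj[OF A, of x z] dirac_form_cnj[OF A, of y z]
      by (simp add: laxB_entry dpart_def adj_def algebra_simps)
  next
    case 4 then show ?thesis using c dirac_form_off_band[OF A, of z y] dirac_form_off_band[OF A, of x z]
      by (simp add: laxB_entry dpart_def adj_def)
  qed
qed

lemma dpart_lax_field: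
  assumes "dirac_form S A"
  shows "dpart (lax_field S \<beta> A) =
    mscale (1 - \<i> * of_real \<beta>) (msub (mmul S (dpart A) (bpart A)) (mmul S (bpart A) (dpart A)))"
proof (intro ext)
  fix x y
  show "dpart (lax_field S \<beta> A) x y =
      mscale (1 - \<i> * of_real \<beta>) (msub (mmul S (dpart A) (bpart A)) (mmul S (bpart A) (dpart A))) x y"
  proof (cases "card x = card y + 1")
    case True
    then show ?thesis
      by (simp add: dpart_def lax_field_entry lax_term_dpart[OF assms] mscale_def msub_def mmul_def
          sum_subtractf flip: sum_distrib_left)
  next
    case False
    then have "(\<Sum>z\<in>S. dpart A x z * bpart A z y) = 0" "(\<Sum>z\<in>S. bpart A x z * dpart A z y) = 0"
      by (auto simp: dpart_def bpart_def intro!: sum.neutral)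
    then show ?thesis using False by (simp add: dpart_def mscale_def msub_def mmul_def)
  qed
qed

lemma bpart_lax_field:
  assumes "dirac_form S A"
  shows "bpart (lax_field S \<beta> A) =
    mscale 2 (msub (mmul S (dpart A) (adj (dpart A))) (mmul S (adj (dpart A)) (dpart A)))"
proof (intro ext)
  fix x y
  show "bpart (lax_field S \<beta> A) x y =
      mscale 2 (msub (mmul S (dpart A) (adj (dpart A))) (mmul S (adj (dpart A)) (dpart A))) x y"
  proof (cases "card x = card y")
    case True
    then show ?thesis
      by (simp add: bpart_def lax_field_entry lax_term_bpart[OF assms] mscale_def msub_def mmul_def
          sum_subtractf flip: sum_distrib_left)
  next
    case False
    then have "(\<Sum>z\<in>S. dpart A x z * adj (dpart A) z y) = 0"
      "(\<Sum>z\<in>S. adj (dpart A) x z * dpart A z y) = 0"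
      by (auto simp: dpart_def adj_def intro!: sum.neutral)
    then show ?thesis using False by (simp add: bpart_def mscale_def msub_def mmul_def)
  qed
qed

lemma dirac_form_lax_field:
  assumes A: "dirac_form S A"
  shows "dirac_form S (lax_field S \<beta> A)"
proof -
  have "cnj (laxB \<beta> A y z * A z x - A y z * laxB \<beta> A z x) = laxB \<beta> A x z * A z y - A x z * laxB \<beta> A z y"
    for x y z
    using laxB_skew[OF A, of \<beta> y z] laxB_skew[OF A, of \<beta> z x] dirac_form_cnj[OF A, of x z]
      dirac_form_cnj[OF A, of z y]
    by (simp add: algebra_simps)
  then have "self_adjoint (lax_field S \<beta> A)"
    by (auto simp: self_adjoint_def adj_def lax_field_entry fun_eq_iff)
  moreover have "lax_field S \<beta> A x y = 0"
    if "\<not> (x \<in> S \<and> y \<in> S \<and> (card x = card y + 1 \<or> card y = card x + 1 \<or> card x = card y))" for x y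
    using that lax_term_off_band[OF A, of x y \<beta>] by (auto simp: lax_field_entry)
  ultimately show ?thesis
    unfolding dirac_form_def by blast
qed

lemma norm_laxB_le:
  fixes e :: real
  assumes "\<And>p q. p \<in> S \<Longrightarrow> q \<in> S \<Longrightarrow> cmod (A p q) \<le> e" and "p \<in> S" "q \<in> S" "0 \<le> e"
  shows "cmod (laxB \<beta> A p q) \<le> (2 + \<bar>\<beta>\<bar>) * e"
proof -
  have "cmod (laxB \<beta> A p q) \<le> cmod (if card p = card q + 1 then A p q else 0)
      + cmod (cnj (if card q = card p + 1 then A q p else 0))
      + cmod (\<i> * of_real \<beta> * (if card p = card q then A p q else 0))"
    unfolding laxB_entry by (meson norm_triangle_ineq4 norm_triangle_le add_mono order_refl)
  also have "\<dots> \<le> e + e + \<bar>\<beta>\<bar> * e"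
    using assms by (intro add_mono) (auto simp: norm_mult intro: mult_left_mono)
  finally show ?thesis by (simp add: algebra_simps)
qed

text \<open>The Lax field is locally Lipschitz: with \<open>E = A - P\<close>, the difference of the fields is
  \<open>B\<^sub>A E + B\<^sub>E P - E B\<^sub>A - P B\<^sub>E\<close>.\<close>
lemma norm_lax_field_diff_le:
  fixes \<beta> K e :: real
  assumes A: "\<And>p q. p \<in> S \<Longrightarrow> q \<in> S \<Longrightarrow> cmod (A p q) \<le> K"
    and P: "\<And>p q. p \<in> S \<Longrightarrow> q \<in> S \<Longrightarrow> cmod (P p q) \<le> K"
    and AP: "\<And>p q. p \<in> S \<Longrightarrow> q \<in> S \<Longrightarrow> cmod (A p q - P p q) \<le> e"
    and "0 \<le> K" "0 \<le> e"
  shows "cmod (msub (lax_field S \<beta> A) (lax_field S \<beta> P) x y) \<le> 4 * card S * (2 + \<bar>\<beta>\<bar>) * K * e"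
proof -
  define E where "E = msub A P"
  have E: "cmod (E p q) \<le> e" if "p \<in> S" "q \<in> S" for p q
    using AP[OF that] by (simp add: E_def msub_def)
  have BA: "cmod (laxB \<beta> A p q) \<le> (2 + \<bar>\<beta>\<bar>) * K" if "p \<in> S" "q \<in> S" for p q
    by (rule norm_laxB_le) (use A that \<open>0 \<le> K\<close> in auto)
  have BE: "cmod (laxB \<beta> E p q) \<le> (2 + \<bar>\<beta>\<bar>) * e" if "p \<in> S" "q \<in> S" for p q
    by (rule norm_laxB_le) (use E that \<open>0 \<le> e\<close> in auto)
  have "msub (lax_field S \<beta> A) (lax_field S \<beta> P) =
      msub (madd (mmul S (laxB \<beta> A) E) (mmul S (laxB \<beta> E) P))
           (madd (mmul S E (laxB \<beta> A)) (mmul S P (laxB \<beta> E)))"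
    unfolding E_def lax_field_def laxB_msub mmul_distribs
    by (simp add: fun_eq_iff msub_def madd_def mmul_def algebra_simps)
  then have "cmod (msub (lax_field S \<beta> A) (lax_field S \<beta> P) x y) \<le>
      cmod (mmul S (laxB \<beta> A) E x y) + cmod (mmul S (laxB \<beta> E) P x y)
      + cmod (mmul S E (laxB \<beta> A) x y) + cmod (mmul S P (laxB \<beta> E) x y)"
    by (simp add: msub_def madd_def) (smt (verit) norm_triangle_ineq norm_triangle_ineq4)
  also have "\<dots> \<le> card S * ((2 + \<bar>\<beta>\<bar>) * K) * e + card S * ((2 + \<bar>\<beta>\<bar>) * e) * K
      + card S * e * ((2 + \<bar>\<beta>\<bar>) * K) + card S * K * ((2 + \<bar>\<beta>\<bar>) * e)"
    using BA BE E P \<open>0 \<le> K\<close> \<open>0 \<le> e\<close> by (intro add_mono norm_mmul_le) auto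
  finally show ?thesis by (simp add: algebra_simps)
qed

lemma has_vector_derivative_dirac_part:
  assumes "\<And>x y. ((\<lambda>s. A s x y) has_vector_derivative A' x y) (at t)"
  shows "((\<lambda>s. dirac_part S (A s) x y) has_vector_derivative dirac_part S A' x y) (at t)"
  using assms[of x y] assms[of y x]
  by (auto simp: dirac_part_def intro!: derivative_eq_intros)

text \<open>The defect from Dirac form of the Lax field is controlled by the defect of its argument,
  because the field of a Dirac form operator is again of Dirac form.\<close>
lemma norm_lax_field_defect_le:
  fixes \<beta> K :: real
  assumes fin: "finite S"
    and A: "\<And>p q. p \<in> S \<Longrightarrow> q \<in> S \<Longrightarrow> cmod (A p q) \<le> K" and "0 \<le> K"
  shows "cmod (msub (lax_field S \<beta> A) (dirac_part S (lax_field S \<beta> A)) x y)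
    \<le> 8 * card S * (2 + \<bar>\<beta>\<bar>) * K * (\<Sum>j\<in>S \<times> S. cmod (msub A (dirac_part S A) (fst j) (snd j)))"
proof -
  define P where "P = dirac_part S A"
  define X where "X = msub (lax_field S \<beta> A) (lax_field S \<beta> P)"
  define e where "e = (\<Sum>j\<in>S \<times> S. cmod (msub A P (fst j) (snd j)))"
  define c where "c = 4 * card S * (2 + \<bar>\<beta>\<bar>) * K * e"
  have "0 \<le> e" unfolding e_def by (simp add: sum_nonneg)
  have P: "cmod (P p q) \<le> K" if "p \<in> S" "q \<in> S" for p q
    using norm_dirac_part_le[of S A p q] A[OF that] A[OF that(2,1)] by (simp add: P_def)
  have AP: "cmod (A p q - P p q) \<le> e" if "p \<in> S" "q \<in> S" for p q
    using member_le_sum[of "(p, q)" "S \<times> S" "\<lambda>j. cmod (msub A P (fst j) (snd j))"] that fin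
    by (simp add: e_def msub_def)
  have X: "cmod (X p q) \<le> c" for p q
    unfolding X_def c_def using A P AP \<open>0 \<le> K\<close> \<open>0 \<le> e\<close> by (rule norm_lax_field_diff_le)
  have "dirac_part S (lax_field S \<beta> P) = lax_field S \<beta> P"
    unfolding P_def by (intro dirac_part_eq dirac_form_lax_field dirac_form_dirac_part)
  then have "msub (lax_field S \<beta> A) (dirac_part S (lax_field S \<beta> A)) x y = X x y - dirac_part S X x y"
    unfolding X_def dirac_part_msub by (simp add: msub_def)
  also have "cmod \<dots> \<le> cmod (X x y) + (cmod (X x y) + cmod (X y x)) / 2"
    using norm_dirac_part_le[of S X x y] norm_triangle_ineq4 by (metis add_left_mono order_trans)
  also have "\<dots> \<le> c + (c + c) / 2"
    by (intro add_mono divide_right_mono X) auto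
  finally show ?thesis by (simp add: c_def e_def P_def field_simps)
qed

section \<open>The Dirac deformation\<close>

locale dirac_flow =
  fixes S :: "'a::linorder set set" and \<beta> :: real and D :: "real \<Rightarrow> 'a op"
  assumes finite_S: "finite S"
    and D_0: "D 0 = dirac0 S"
    and D_deriv: "\<And>t x y. ((\<lambda>s. D s x y) has_vector_derivative lax_field S \<beta> (D t) x y) (at t)"
begin

lemma continuous_D: "continuous_on A (\<lambda>s. D s x y)"
  using has_vector_derivative_continuous[OF D_deriv] by (intro continuous_at_imp_continuous_on) auto

lemma D_outside:
  assumes "x \<notin> S \<or> y \<notin> S"
  shows "D t x y = 0"
proof -
  have "((\<lambda>s. D s x y) has_vector_derivative 0) (at s within UNIV)" for s
    using D_deriv[of x y s] assms by (auto simp: lax_field_entry)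
  then have "D t x y = D 0 x y"
    using has_vector_derivative_zero_constant[of UNIV "\<lambda>s. D s x y"] by (metis UNIV_I convex_UNIV)
  then show ?thesis
    using dirac_form_outside[OF dirac_form_dirac0 assms] by (simp add: D_0)
qed

text \<open>The defect \<open>D - dirac_part S D\<close> satisfies a linearly bounded equation and vanishes at
  \<open>0\<close>, so it vanishes identically.\<close>
lemma dirac_form_D: "dirac_form S (D t)"
proof -
  define a where "a = min 0 t"
  define b where "b = max 0 t"
  obtain K where "0 \<le> K" and K: "\<And>s p q. s \<in> {a..b} \<Longrightarrow> p \<in> S \<Longrightarrow> q \<in> S \<Longrightarrow> cmod (D s p q) \<le> K"
    using continuous_entries_bounded[where B = D, OF finite_S continuous_D] by blast
  define E where "E s j = msub (D s) (dirac_part S (D s)) (fst j) (snd j)" for s j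
  define E' where "E' s j = msub (lax_field S \<beta> (D s)) (dirac_part S (lax_field S \<beta> (D s))) (fst j) (snd j)"
    for s j
  have "E t (x, y) = 0" if "x \<in> S" "y \<in> S" for x y
  proof (rule gronwall_vanishing[where E' = E' and K = "8 * card S * (2 + \<bar>\<beta>\<bar>) * K"
        and a = a and b = b and \<tau> = 0])
    show "((\<lambda>s. E s j) has_vector_derivative E' s j) (at s)" for s j
      unfolding E_def E'_def msub_def
      by (intro has_vector_derivative_diff D_deriv has_vector_derivative_dirac_part)
    show "cmod (E' s j) \<le> 8 * card S * (2 + \<bar>\<beta>\<bar>) * K * (\<Sum>i\<in>S \<times> S. cmod (E s i))" if "s \<in> {a..b}" for s j
      unfolding E_def E'_def using K[OF that] \<open>0 \<le> K\<close> by (intro norm_lax_field_defect_le finite_S)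
    show "E 0 j = 0" for j
      by (simp add: E_def D_0 msub_def dirac_part_eq[OF dirac_form_dirac0[of S]])
  qed (use that finite_S \<open>0 \<le> K\<close> in \<open>auto simp: a_def b_def\<close>)
  moreover have "D t x y = 0" "dirac_part S (D t) x y = 0" if "x \<notin> S \<or> y \<notin> S" for x y
    using that D_outside by (auto simp: dirac_part_def)
  ultimately have "D t = dirac_part S (D t)"
    by (fastforce simp: E_def msub_def fun_eq_iff)
  then show ?thesis by (metis dirac_form_dirac_part)
qed

end

locale dirac_flow_cochain = dirac_flow +
  assumes ext_d_square: "mmul S (ext_d S) (ext_d S) = mzero"
begin

abbreviation d :: "real \<Rightarrow> 'a op" where "d t \<equiv> dpart (D t)"
abbreviation b :: "real \<Rightarrow> 'a op" where "b t \<equiv> bpart (D t)"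
abbreviation \<gamma> :: complex where "\<gamma> \<equiv> 1 - \<i> * complex_of_real \<beta>"

lemma D_decompose: "D t = madd (madd (d t) (adj (d t))) (b t)"
  by (rule dirac_form_decompose[OF dirac_form_D])

lemma b_self_adjoint: "adj (b t) = b t"
  by (rule dirac_form_bpart_self_adjoint[OF dirac_form_D])

lemma d_0: "d 0 = ext_d S"
  by (auto simp: D_0 dirac0_def dpart_def madd_def adj_def ext_d_def fun_eq_iff)

lemma b_0: "b 0 = mzero"
  by (auto simp: D_0 dirac0_def bpart_def madd_def adj_def ext_d_def mzero_def fun_eq_iff)

lemma d_deriv: "((\<lambda>s. d s x y) has_vector_derivative
    mscale \<gamma> (msub (mmul S (d t) (b t)) (mmul S (b t) (d t))) x y) (at t)"
proof -
  have "((\<lambda>s. d s x y) has_vector_derivative dpart (lax_field S \<beta> (D t)) x y) (at t)"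
    by (cases "card x = card y + 1") (auto simp: dpart_def D_deriv)
  then show ?thesis by (simp add: dpart_lax_field[OF dirac_form_D])
qed

lemma adj_d_deriv: "((\<lambda>s. adj (d s) x y) has_vector_derivative
    mscale (cnj \<gamma>) (msub (mmul S (b t) (adj (d t))) (mmul S (adj (d t)) (b t))) x y) (at t)"
proof -
  have "((\<lambda>s. adj (d s) x y) has_vector_derivative
      adj (mscale \<gamma> (msub (mmul S (d t) (b t)) (mmul S (b t) (d t)))) x y) (at t)"
    unfolding adj_def by (intro has_vector_derivative_cnj d_deriv)
  then show ?thesis by (simp add: adj_mscale adj_msub adj_mmul b_self_adjoint)
qed

lemma b_deriv: "((\<lambda>s. b s x y) has_vector_derivative
    mscale 2 (msub (mmul S (d t) (adj (d t))) (mmul S (adj (d t)) (d t))) x y) (at t)"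
proof -
  have "((\<lambda>s. b s x y) has_vector_derivative bpart (lax_field S \<beta> (D t)) x y) (at t)"
    by (cases "card x = card y") (auto simp: bpart_def D_deriv)
  then show ?thesis by (simp add: bpart_lax_field[OF dirac_form_D])
qed

lemma continuous_mscale_b: "continuous_on A (\<lambda>s. mscale c (b s) x y)"
  using has_vector_derivative_continuous[OF b_deriv]
  by (auto simp: mscale_def intro!: continuous_intros continuous_at_imp_continuous_on)

text \<open>Both \<open>d\<^sup>2\<close> and the anticommutator \<open>d b + b d\<close> solve linear equations of the form
  \<open>X' = X (\<gamma> b) - (\<gamma> b) X\<close> and vanish at \<open>t = 0\<close>.\<close>
lemma d_square: "mmul S (d t) (d t) = mzero"
proof (rule mmul_eq_mzeroI)
  fix x y assume "x \<in> S" "y \<in> S"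
  have "((\<lambda>s. mmul S (d s) (d s) x y) has_vector_derivative
      madd (mmul S (mmul S (d s) (d s)) (mscale \<gamma> (b s)))
           (mmul S (mscale (- \<gamma>) (b s)) (mmul S (d s) (d s))) x y) (at s)" for s x y
  proof -
    have "((\<lambda>s. mmul S (d s) (d s) x y) has_vector_derivative
        madd (mmul S (mscale \<gamma> (msub (mmul S (d s) (b s)) (mmul S (b s) (d s)))) (d s))
             (mmul S (d s) (mscale \<gamma> (msub (mmul S (d s) (b s)) (mmul S (b s) (d s))))) x y) (at s)"
      by (rule has_vector_derivative_mmul; rule d_deriv)
    also have "madd (mmul S (mscale \<gamma> (msub (mmul S (d s) (b s)) (mmul S (b s) (d s)))) (d s))
             (mmul S (d s) (mscale \<gamma> (msub (mmul S (d s) (b s)) (mmul S (b s) (d s))))) =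
        madd (mmul S (mmul S (d s) (d s)) (mscale \<gamma> (b s)))
             (mmul S (mscale (- \<gamma>) (b s)) (mmul S (d s) (d s)))"
      by (simp only: mmul_distribs mmul_assoc[OF finite_S])
         (simp add: fun_eq_iff madd_def msub_def mscale_def algebra_simps)
    finally show ?thesis .
  qed
  then show "mmul S (d t) (d t) x y = 0"
    by (rule linear_matrix_ode_vanishing[OF finite_S _ continuous_mscale_b continuous_mscale_b _
          \<open>x \<in> S\<close> \<open>y \<in> S\<close>, where \<tau> = 0])
       (simp add: d_0 ext_d_square mzero_def)
qed

lemma adj_d_square: "mmul S (adj (d t)) (adj (d t)) = mzero"
  by (metis adj_mmul adj_mzero d_square)

lemma d_square_left: "mmul S (d t) (mmul S (d t) X) = mzero"
  by (simp add: mmul_assoc[OF finite_S, symmetric] d_square)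

lemma adj_d_square_left: "mmul S (adj (d t)) (mmul S (adj (d t)) X) = mzero"
  by (simp add: mmul_assoc[OF finite_S, symmetric] adj_d_square)

lemma d_b_anticommutator: "madd (mmul S (d t) (b t)) (mmul S (b t) (d t)) = mzero"
proof (rule ext, rule ext)
  fix x y
  define X where "X s = madd (mmul S (d s) (b s)) (mmul S (b s) (d s))" for s
  have "((\<lambda>s. X s x y) has_vector_derivative
      madd (mmul S (X s) (mscale \<gamma> (b s))) (mmul S (mscale (- \<gamma>) (b s)) (X s)) x y) (at s)" for s x y
  proof -
    let ?d' = "mscale \<gamma> (msub (mmul S (d s) (b s)) (mmul S (b s) (d s)))"
    let ?b' = "mscale 2 (msub (mmul S (d s) (adj (d s))) (mmul S (adj (d s)) (d s)))"
    have "((\<lambda>s. X s x y) has_vector_derivative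
        madd (madd (mmul S ?d' (b s)) (mmul S (d s) ?b')) (madd (mmul S ?b' (d s)) (mmul S (b s) ?d')) x y)
        (at s)"
      unfolding X_def by (rule has_vector_derivative_madd; rule has_vector_derivative_mmul; rule d_deriv b_deriv)
    also have "madd (madd (mmul S ?d' (b s)) (mmul S (d s) ?b')) (madd (mmul S ?b' (d s)) (mmul S (b s) ?d')) =
        madd (mmul S (X s) (mscale \<gamma> (b s))) (mmul S (mscale (- \<gamma>) (b s)) (X s))"
      unfolding X_def
      by (simp only: mmul_distribs mmul_assoc[OF finite_S] d_square d_square_left mmul_mzero_left
          mmul_mzero_right)
         (simp add: fun_eq_iff madd_def msub_def mscale_def mzero_def algebra_simps)
    finally show ?thesis .
  qed
  then have "X t x y = 0" if "x \<in> S" "y \<in> S"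
    by (rule linear_matrix_ode_vanishing[OF finite_S _ continuous_mscale_b continuous_mscale_b _ that,
          where \<tau> = 0])
       (simp add: X_def b_0, simp add: mzero_def)
  then show "madd (mmul S (d t) (b t)) (mmul S (b t) (d t)) x y = mzero x y"
    by (cases "x \<in> S \<and> y \<in> S") (auto simp: X_def madd_def mmul_def mzero_def)
qed

lemma d_b_anticommute: "mmul S (d t) (b t) = mscale (-1) (mmul S (b t) (d t))"
  using d_b_anticommutator madd_eq_mzero_iff by blast

lemma adj_d_b_anticommute: "mmul S (adj (d t)) (b t) = mscale (-1) (mmul S (b t) (adj (d t)))"
proof -
  have "adj (mmul S (d t) (b t)) = adj (mscale (-1) (mmul S (b t) (d t)))"
    by (simp only: d_b_anticommute)
  then show ?thesis
    by (simp add: adj_mmul adj_mscale b_self_adjoint)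
qed

lemma d_b_anticommute_left: "mmul S (d t) (mmul S (b t) X) = mscale (-1) (mmul S (b t) (mmul S (d t) X))"
  by (simp add: mmul_assoc[OF finite_S, symmetric] d_b_anticommute mmul_mscale_left)

lemma adj_d_b_anticommute_left:
  "mmul S (adj (d t)) (mmul S (b t) X) = mscale (-1) (mmul S (b t) (mmul S (adj (d t)) X))"
  by (simp add: mmul_assoc[OF finite_S, symmetric] adj_d_b_anticommute mmul_mscale_left)

text \<open>Rewriting with these rules brings every product of \<open>d\<close>, \<open>d\<^sup>*\<close>, \<open>b\<close> into a normal form
  with the \<open>b\<close> factors in front and no factor \<open>d d\<close> or \<open>d\<^sup>* d\<^sup>*\<close>.\<close>
lemmas flow_normalize = mmul_distribs mmul_assoc[OF finite_S]
  d_square d_square_left adj_d_square adj_d_square_left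
  d_b_anticommute d_b_anticommute_left adj_d_b_anticommute adj_d_b_anticommute_left
  mmul_mzero_left mmul_mzero_right madd_mzero msub_mzero mscale_mzero mscale_mscale

lemma lax_field_D: "lax_field S \<beta> (D t) =
    madd (madd (mscale \<gamma> (msub (mmul S (d t) (b t)) (mmul S (b t) (d t))))
               (mscale (cnj \<gamma>) (msub (mmul S (b t) (adj (d t))) (mmul S (adj (d t)) (b t)))))
         (mscale 2 (msub (mmul S (d t) (adj (d t))) (mmul S (adj (d t)) (d t))))"
  by (subst dirac_form_decompose[OF dirac_form_lax_field[OF dirac_form_D]])
     (simp only: dpart_lax_field[OF dirac_form_D] bpart_lax_field[OF dirac_form_D]
       adj_mscale adj_msub adj_mmul adj_adj b_self_adjoint)

abbreviation L :: "'a op" where "L \<equiv> mmul S (dirac0 S) (dirac0 S)"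

text \<open>\<open>(D\<^sup>2)' = D' D + D D'\<close> vanishes by the normal form computation.\<close>
lemma D_square: "mmul S (D t) (D t) = L"
proof -
  have "madd (mmul S (lax_field S \<beta> (D s)) (D s)) (mmul S (D s) (lax_field S \<beta> (D s))) = mzero" for s
    unfolding lax_field_D
    by (subst (2 4) D_decompose, simp only: flow_normalize)
       (simp add: fun_eq_iff madd_def msub_def mscale_def mzero_def algebra_simps)
  moreover have "((\<lambda>s. mmul S (D s) (D s) x y) has_vector_derivative
      madd (mmul S (lax_field S \<beta> (D s)) (D s)) (mmul S (D s) (lax_field S \<beta> (D s))) x y) (at s)" for s x y
    by (rule has_vector_derivative_mmul; rule D_deriv)
  ultimately have "((\<lambda>s. mmul S (D s) (D s) x y) has_vector_derivative 0) (at s within UNIV)" for s x y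
    by (simp add: mzero_def)
  then have "mmul S (D t) (D t) x y = mmul S (D 0) (D 0) x y" for x y
    using has_vector_derivative_zero_constant[of UNIV "\<lambda>s. mmul S (D s) (D s) x y"]
    by (metis UNIV_I convex_UNIV)
  then show ?thesis by (auto simp: D_0 fun_eq_iff)
qed

end

section \<open>Quadratic forms and kernels\<close>

definition vinner :: "'a set set \<Rightarrow> ('a set \<Rightarrow> complex) \<Rightarrow> ('a set \<Rightarrow> complex) \<Rightarrow> complex" where
  "vinner S f g = (\<Sum>x\<in>S. cnj (f x) * g x)"

definition sqnorm :: "'a set set \<Rightarrow> ('a set \<Rightarrow> complex) \<Rightarrow> real" where
  "sqnorm S f = (\<Sum>x\<in>S. (cmod (f x))\<^sup>2)"

lemma vinner_mvec: "vinner S f (mvec S A g) = vinner S (mvec S (adj A) f) g"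
proof -
  have "vinner S f (mvec S A g) = (\<Sum>x\<in>S. \<Sum>y\<in>S. cnj (f x) * A x y * g y)"
    by (simp add: vinner_def mvec_def sum_distrib_left mult.assoc)
  also have "\<dots> = (\<Sum>y\<in>S. \<Sum>x\<in>S. cnj (f x) * A x y * g y)"
    by (rule sum.swap)
  also have "\<dots> = vinner S (mvec S (adj A) f) g"
    by (simp add: vinner_def mvec_def adj_def sum_distrib_left sum_distrib_right mult_ac)
  finally show ?thesis .
qed

lemma vinner_self: "vinner S f f = of_real (sqnorm S f)"
  unfolding vinner_def sqnorm_def of_real_sum complex_norm_square by (simp add: mult.commute)

lemma vinner_mvec_mmul_adj: "vinner S f (mvec S (mmul S A (adj A)) f) = of_real (sqnorm S (mvec S (adj A) f))"
  by (simp add: mvec_mmul vinner_mvec vinner_self)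

lemma vinner_mvec_madd: "vinner S f (mvec S (madd A B) g) = vinner S f (mvec S A g) + vinner S f (mvec S B g)"
  by (simp add: vinner_def mvec_madd sum.distrib algebra_simps)

lemma sqnorm_nonneg: "0 \<le> sqnorm S f"
  by (simp add: sqnorm_def sum_nonneg)

lemma sqnorm_eq_0_iff: "finite S \<Longrightarrow> f \<in> vecs S \<Longrightarrow> sqnorm S f = 0 \<longleftrightarrow> f = (\<lambda>_. 0)"
  by (auto simp: sqnorm_def vecs_def sum_nonneg_eq_0_iff fun_eq_iff)

lemma sqnorm_pos:
  assumes "finite S" "f \<in> vecs S" "f \<noteq> (\<lambda>_. 0)"
  shows "0 < sqnorm S f"
proof -
  have "sqnorm S f \<noteq> 0" using sqnorm_eq_0_iff[OF assms(1,2)] assms(3) by blast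
  then show ?thesis using sqnorm_nonneg[of S f] by linarith
qed

lemma mvec_mmul_adj_eq_0_iff:
  assumes "finite S"
  shows "mvec S (mmul S A (adj A)) f = (\<lambda>_. 0) \<longleftrightarrow> mvec S (adj A) f = (\<lambda>_. 0)"
proof
  assume "mvec S (mmul S A (adj A)) f = (\<lambda>_. 0)"
  then have "sqnorm S (mvec S (adj A) f) = 0"
    using vinner_mvec_mmul_adj[of S f A] by (simp add: vinner_def)
  then show "mvec S (adj A) f = (\<lambda>_. 0)"
    using sqnorm_eq_0_iff[OF assms mvec_in_vecs] by blast
qed (simp add: mvec_mmul)

lemma mvec_sum_mmul_adj_eq_0_iff:
  assumes "finite S"
  shows "mvec S (madd (mmul S A (adj A)) (mmul S B (adj B))) f = (\<lambda>_. 0) \<longleftrightarrow>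
    mvec S (adj A) f = (\<lambda>_. 0) \<and> mvec S (adj B) f = (\<lambda>_. 0)"
proof
  assume "mvec S (madd (mmul S A (adj A)) (mmul S B (adj B))) f = (\<lambda>_. 0)"
  then have "vinner S f (mvec S (madd (mmul S A (adj A)) (mmul S B (adj B))) f) = 0"
    by (simp add: vinner_def)
  then have "of_real (sqnorm S (mvec S (adj A) f)) + of_real (sqnorm S (mvec S (adj B) f)) = (0 :: complex)"
    by (simp only: vinner_mvec_madd vinner_mvec_mmul_adj)
  then have "sqnorm S (mvec S (adj A) f) + sqnorm S (mvec S (adj B) f) = 0"
    by (metis of_real_add of_real_eq_0_iff)
  then have "sqnorm S (mvec S (adj A) f) = 0" "sqnorm S (mvec S (adj B) f) = 0"
    using sqnorm_nonneg by (smt (verit))+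
  then show "mvec S (adj A) f = (\<lambda>_. 0) \<and> mvec S (adj B) f = (\<lambda>_. 0)"
    using sqnorm_eq_0_iff[OF assms mvec_in_vecs] by blast
qed (simp add: mvec_madd mvec_mmul)

lemma eigenvalue_mmul_self_nonneg:
  assumes fin: "finite S" and "self_adjoint A" and "eigenvalue S (mmul S A A) c"
  shows "Im c = 0 \<and> 0 \<le> Re c"
proof -
  obtain f where f: "f \<in> vecs S" "f \<noteq> (\<lambda>_. 0)" "mvec S (mmul S A A) f = (\<lambda>x. c * f x)"
    using assms(3) by (auto simp: eigenvalue_def)
  have "0 < sqnorm S f"
    using sqnorm_pos[OF fin f(1,2)] .
  have "c * of_real (sqnorm S f) = vinner S f (mvec S (mmul S A (adj A)) f)"
    using f(3) \<open>self_adjoint A\<close> by (simp add: self_adjoint_def vinner_def sum_distrib_left vinner_self[symmetric]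
        algebra_simps)
  also have "\<dots> = of_real (sqnorm S (mvec S (adj A) f))"
    by (rule vinner_mvec_mmul_adj)
  finally have "c = of_real (sqnorm S (mvec S (adj A) f) / sqnorm S f)"
    using \<open>0 < sqnorm S f\<close> by (simp add: field_simps)
  moreover have "0 \<le> sqnorm S (mvec S (adj A) f) / sqnorm S f"
    using \<open>0 < sqnorm S f\<close> sqnorm_nonneg by (intro divide_nonneg_pos)
  ultimately show ?thesis
    by (simp del: of_real_divide)
qed

lemma has_vector_derivative_vinner_mvec:
  assumes "\<And>x y. ((\<lambda>s. A s x y) has_vector_derivative A' x y) (at t)"
  shows "((\<lambda>s. vinner S g (mvec S (A s) g)) has_vector_derivative vinner S g (mvec S A' g)) (at t)"
proof -
  have eq: "vinner S g (mvec S X g) = (\<Sum>x\<in>S. \<Sum>y\<in>S. cnj (g x) * (X x y * g y))" for X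
    by (simp add: vinner_def mvec_def sum_distrib_left)
  show ?thesis
    unfolding eq
    by (intro has_vector_derivative_sum has_vector_derivative_mult_right has_vector_derivative_mult_left assms)
qed

context dirac_flow_cochain
begin

abbreviation C :: "real \<Rightarrow> 'a op" where "C t \<equiv> madd (d t) (adj (d t))"
abbreviation M :: "real \<Rightarrow> 'a op" where "M t \<equiv> mmul S (C t) (C t)"
abbreviation Vb :: "real \<Rightarrow> 'a op" where "Vb t \<equiv> mmul S (b t) (b t)"
abbreviation R :: "real \<Rightarrow> 'a op" where "R t \<equiv> mmul S (d t) (adj (d t))"
abbreviation Sd :: "real \<Rightarrow> 'a op" where "Sd t \<equiv> mmul S (adj (d t)) (d t)"

lemma M_eq: "M t = madd (R t) (Sd t)"
  by (simp only: flow_normalize) (simp add: fun_eq_iff madd_def)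

lemma L_eq_R_Sd_Vb: "L = madd (madd (R t) (Sd t)) (Vb t)"
proof -
  have "L = mmul S (madd (madd (d t) (adj (d t))) (b t)) (madd (madd (d t) (adj (d t))) (b t))"
    by (simp only: D_square[symmetric] D_decompose[symmetric])
  also have "\<dots> = madd (madd (R t) (Sd t)) (Vb t)"
    by (simp only: flow_normalize) (simp add: fun_eq_iff madd_def mscale_def)
  finally show ?thesis .
qed

lemma L_eq_M_Vb: "L = madd (M t) (Vb t)"
  by (simp only: M_eq L_eq_R_Sd_Vb)

lemma self_adjoint_C: "adj (C t) = C t"
  using self_adjoint_madd_adj by (simp add: self_adjoint_def)

lemma self_adjoint_operators: "\<forall>X\<in>{M t, L, Vb t, R t, Sd t}. self_adjoint X"
  using dirac_form_dirac0[of S] self_adjoint_C[of t] b_self_adjoint[of t]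
  by (auto simp: self_adjoint_def adj_mmul dirac_form_def)

lemma operators_commute: "\<forall>X\<in>{M t, L, Vb t, R t, Sd t}. \<forall>Y\<in>{M t, L, Vb t, R t, Sd t}. mmul S X Y = mmul S Y X"
  unfolding L_eq_R_Sd_Vb[of t] M_eq[of t]
  by (simp only: ball_simps insert_iff empty_iff simp_thms flow_normalize)
     (simp add: fun_eq_iff madd_def mscale_def algebra_simps)

lemma M_eigenvalue_nonneg: "eigenvalue S (M t) c \<Longrightarrow> Im c = 0 \<and> 0 \<le> Re c"
  by (rule eigenvalue_mmul_self_nonneg[OF finite_S]) (simp_all add: self_adjoint_def self_adjoint_C)

lemma Vb_eigenvalue_nonneg: "eigenvalue S (Vb t) c \<Longrightarrow> Im c = 0 \<and> 0 \<le> Re c"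
  by (rule eigenvalue_mmul_self_nonneg[OF finite_S]) (simp_all add: self_adjoint_def b_self_adjoint)

lemma R_deriv: "((\<lambda>s. R s x y) has_vector_derivative mmul S (mscale (-4) (b t)) (R t) x y) (at t)"
proof -
  have "((\<lambda>s. R s x y) has_vector_derivative
      madd (mmul S (mscale \<gamma> (msub (mmul S (d t) (b t)) (mmul S (b t) (d t)))) (adj (d t)))
           (mmul S (d t) (mscale (cnj \<gamma>) (msub (mmul S (b t) (adj (d t))) (mmul S (adj (d t)) (b t))))) x y)
      (at t)"
    by (rule has_vector_derivative_mmul; rule d_deriv adj_d_deriv)
  also have "madd (mmul S (mscale \<gamma> (msub (mmul S (d t) (b t)) (mmul S (b t) (d t)))) (adj (d t)))
      (mmul S (d t) (mscale (cnj \<gamma>) (msub (mmul S (b t) (adj (d t))) (mmul S (adj (d t)) (b t))))) =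
      mmul S (mscale (-4) (b t)) (R t)"
    by (simp only: flow_normalize) (simp add: fun_eq_iff madd_def msub_def mscale_def algebra_simps)
  finally show ?thesis .
qed

lemma Sd_deriv: "((\<lambda>s. Sd s x y) has_vector_derivative mmul S (mscale 4 (b t)) (Sd t) x y) (at t)"
proof -
  have "((\<lambda>s. Sd s x y) has_vector_derivative
      madd (mmul S (mscale (cnj \<gamma>) (msub (mmul S (b t) (adj (d t))) (mmul S (adj (d t)) (b t)))) (d t))
           (mmul S (adj (d t)) (mscale \<gamma> (msub (mmul S (d t) (b t)) (mmul S (b t) (d t))))) x y) (at t)"
    by (rule has_vector_derivative_mmul; rule d_deriv adj_d_deriv)
  also have "madd (mmul S (mscale (cnj \<gamma>) (msub (mmul S (b t) (adj (d t))) (mmul S (adj (d t)) (b t)))) (d t))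
      (mmul S (adj (d t)) (mscale \<gamma> (msub (mmul S (d t) (b t)) (mmul S (b t) (d t))))) =
      mmul S (mscale 4 (b t)) (Sd t)"
    by (simp only: flow_normalize) (simp add: fun_eq_iff madd_def msub_def mscale_def algebra_simps)
  finally show ?thesis .
qed

lemma kernel_R_invariant: "mvec S (R s) f = (\<lambda>_. 0) \<Longrightarrow> mvec S (R t) f = (\<lambda>_. 0)"
  by (rule linear_flow_kernel_invariant[OF finite_S R_deriv continuous_mscale_b])

lemma kernel_Sd_invariant: "mvec S (Sd s) f = (\<lambda>_. 0) \<Longrightarrow> mvec S (Sd t) f = (\<lambda>_. 0)"
  by (rule linear_flow_kernel_invariant[OF finite_S Sd_deriv continuous_mscale_b])

lemma kernel_R_iff: "mvec S (R t) f = (\<lambda>_. 0) \<longleftrightarrow> mvec S (adj (d t)) f = (\<lambda>_. 0)"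
  by (rule mvec_mmul_adj_eq_0_iff[OF finite_S])

lemma kernel_Sd_iff: "mvec S (Sd t) f = (\<lambda>_. 0) \<longleftrightarrow> mvec S (d t) f = (\<lambda>_. 0)"
  using mvec_mmul_adj_eq_0_iff[OF finite_S, of "adj (d t)"] by simp

lemma kernel_M_iff: "mvec S (M t) f = (\<lambda>_. 0) \<longleftrightarrow> mvec S (R t) f = (\<lambda>_. 0) \<and> mvec S (Sd t) f = (\<lambda>_. 0)"
  using mvec_sum_mmul_adj_eq_0_iff[OF finite_S, of "d t" "adj (d t)"]
  unfolding M_eq kernel_R_iff kernel_Sd_iff by simp

lemma kernel_M_iff_kernel_L: "mvec S (M t) f = (\<lambda>_. 0) \<longleftrightarrow> mvec S L f = (\<lambda>_. 0)"
proof -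
  have "L = M 0"
    using L_eq_M_Vb[of 0] by (simp add: b_0)
  then show ?thesis
    unfolding \<open>L = M 0\<close> kernel_M_iff
    using kernel_R_invariant[of t f 0] kernel_R_invariant[of 0 f t]
      kernel_Sd_invariant[of t f 0] kernel_Sd_invariant[of 0 f t]
    by blast
qed

lemma kernel_L_imp_kernel_b:
  assumes "mvec S L f = (\<lambda>_. 0)"
  shows "mvec S (b t) f = (\<lambda>_. 0)"
proof -
  have "L = madd (mmul S (C t) (adj (C t))) (mmul S (b t) (adj (b t)))"
    by (simp only: self_adjoint_C b_self_adjoint L_eq_M_Vb[of t])
  then have "mvec S (adj (b t)) f = (\<lambda>_. 0)"
    using assms mvec_sum_mmul_adj_eq_0_iff[OF finite_S] by metis
  then show ?thesis
    by (simp only: b_self_adjoint)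
qed

lemma kernel_Vb_iff: "mvec S (Vb t) f = (\<lambda>_. 0) \<longleftrightarrow> mvec S (b t) f = (\<lambda>_. 0)"
  using mvec_mmul_adj_eq_0_iff[OF finite_S, of "b t" f] by (simp only: b_self_adjoint)

lemma b_form_deriv: "((\<lambda>s. Re (vinner S g (mvec S (b s) g))) has_real_derivative
    2 * (sqnorm S (mvec S (adj (d t)) g) - sqnorm S (mvec S (d t) g))) (at t)"
proof -
  have vinner_Sd: "vinner S g (mvec S (Sd t) g) = of_real (sqnorm S (mvec S (d t) g))"
    using vinner_mvec_mmul_adj[of S g "adj (d t)"] by simp
  have "((\<lambda>s. vinner S g (mvec S (b s) g)) has_vector_derivative
      vinner S g (mvec S (mscale 2 (msub (R t) (Sd t))) g)) (at t)"
    by (rule has_vector_derivative_vinner_mvec[OF b_deriv])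
  also have "vinner S g (mvec S (mscale 2 (msub (R t) (Sd t))) g) =
      2 * (vinner S g (mvec S (R t) g) - vinner S g (mvec S (Sd t) g))"
    by (simp add: vinner_def mvec_mscale mvec_msub sum_distrib_left sum_subtractf algebra_simps)
  also have "\<dots> = of_real (2 * (sqnorm S (mvec S (adj (d t)) g) - sqnorm S (mvec S (d t) g)))"
    by (simp add: vinner_mvec_mmul_adj vinner_Sd)
  finally show ?thesis
    by (simp add: has_vector_derivative_complex_iff)
qed

text \<open>For \<open>t > 0\<close> the form \<open>s \<mapsto> \<langle>g, b(s) g\<rangle>\<close> vanishes at \<open>0\<close> (as \<open>b(0) = 0\<close>) and, for
  \<open>g \<in> ker b(t)\<close>, at \<open>t\<close>; so its derivative \<open>2(|d\<^sup>*g|\<^sup>2 - |d g|\<^sup>2)\<close> cannot have a fixed strict sign.\<close>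
lemma b_form_derivative_changes_sign:
  assumes "0 < t" and "mvec S (b t) g = (\<lambda>_. 0)"
    and pos: "\<And>s. 0 < \<sigma> * (sqnorm S (mvec S (adj (d s)) g) - sqnorm S (mvec S (d s) g))"
  shows False
proof -
  define \<phi> where "\<phi> s = \<sigma> * Re (vinner S g (mvec S (b s) g))" for s
  have "\<phi> 0 < \<phi> t"
  proof (rule DERIV_pos_imp_increasing[OF \<open>0 < t\<close>])
    fix s
    have "(\<phi> has_real_derivative 2 * (\<sigma> * (sqnorm S (mvec S (adj (d s)) g) - sqnorm S (mvec S (d s) g)))) (at s)"
      unfolding \<phi>_def using DERIV_cmult[OF b_form_deriv, of \<sigma>] by (simp add: algebra_simps)
    then show "\<exists>y. (\<phi> has_real_derivative y) (at s) \<and> 0 < y"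
      using pos[of s] by force
  qed
  moreover have "\<phi> 0 = 0" "\<phi> t = 0"
    using assms(2) by (simp_all add: \<phi>_def b_0 vinner_def mvec_def mzero_def)
  ultimately show False by simp
qed

lemma b_commute_R: "mmul S (b t) (R t) = mmul S (R t) (b t)"
  by (simp only: flow_normalize) (simp add: fun_eq_iff mscale_def)

lemma b_commute_Sd: "mmul S (b t) (Sd t) = mmul S (Sd t) (b t)"
  by (simp only: flow_normalize) (simp add: fun_eq_iff mscale_def)

lemma mvec_R_eq_0_of_kernel_adj_d:
  assumes "mvec S (adj (d s)) (mvec S (R t) f) = (\<lambda>_. 0)"
  shows "mvec S (R t) f = (\<lambda>_. 0)"
proof -
  have "mvec S (R s) (mvec S (R t) f) = (\<lambda>_. 0)"
    using assms by (simp only: kernel_R_iff)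
  then have "mvec S (R t) (mvec S (R t) f) = (\<lambda>_. 0)"
    by (rule kernel_R_invariant)
  then have "mvec S (mmul S (R t) (adj (R t))) f = (\<lambda>_. 0)"
    by (simp only: mvec_mmul adj_mmul adj_adj)
  then have "mvec S (adj (R t)) f = (\<lambda>_. 0)"
    by (simp only: mvec_mmul_adj_eq_0_iff[OF finite_S])
  then show ?thesis
    by (simp only: adj_mmul adj_adj)
qed

lemma mvec_Sd_eq_0_of_kernel_d:
  assumes "mvec S (d s) (mvec S (Sd t) f) = (\<lambda>_. 0)"
  shows "mvec S (Sd t) f = (\<lambda>_. 0)"
proof -
  have "mvec S (Sd s) (mvec S (Sd t) f) = (\<lambda>_. 0)"
    using assms by (simp only: kernel_Sd_iff)
  then have "mvec S (Sd t) (mvec S (Sd t) f) = (\<lambda>_. 0)"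
    by (rule kernel_Sd_invariant)
  then have "mvec S (mmul S (Sd t) (adj (Sd t))) f = (\<lambda>_. 0)"
    by (simp only: mvec_mmul adj_mmul adj_adj)
  then have "mvec S (adj (Sd t)) f = (\<lambda>_. 0)"
    by (simp only: mvec_mmul_adj_eq_0_iff[OF finite_S])
  then show ?thesis
    by (simp only: adj_mmul adj_adj)
qed

text \<open>If \<open>g = R(t) f \<noteq> 0\<close>, then \<open>g \<in> ker b(t)\<close>, \<open>g \<in> ker d(s)\<close> and \<open>g \<notin> ker d(s)\<^sup>*\<close> for all \<open>s\<close>,
  so the derivative of the form is positive everywhere.\<close>
lemma kernel_b_imp_kernel_R:
  assumes "0 < t" and "mvec S (b t) f = (\<lambda>_. 0)"
  shows "mvec S (R t) f = (\<lambda>_. 0)"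
proof (rule ccontr)
  define g where "g = mvec S (R t) f"
  assume "g \<noteq> (\<lambda>_. 0)"
  have "mvec S (b t) g = (\<lambda>_. 0)"
    unfolding g_def mvec_mmul[symmetric] b_commute_R by (simp add: mvec_mmul assms(2))
  moreover have "mvec S (d s) g = (\<lambda>_. 0)" for s
  proof -
    have "mvec S (Sd t) g = (\<lambda>_. 0)"
      unfolding g_def mvec_mmul[symmetric] by (simp only: flow_normalize mvec_mzero)
    then show ?thesis
      using kernel_Sd_invariant kernel_Sd_iff by blast
  qed
  moreover have "0 < sqnorm S (mvec S (adj (d s)) g)" for s
    using mvec_R_eq_0_of_kernel_adj_d[of s t f] \<open>g \<noteq> (\<lambda>_. 0)\<close> unfolding g_def
    by (intro sqnorm_pos[OF finite_S mvec_in_vecs]) blast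
  ultimately show False
    using b_form_derivative_changes_sign[OF \<open>0 < t\<close>, of g 1] by (simp add: sqnorm_def)
qed

lemma kernel_b_imp_kernel_Sd:
  assumes "0 < t" and "mvec S (b t) f = (\<lambda>_. 0)"
  shows "mvec S (Sd t) f = (\<lambda>_. 0)"
proof (rule ccontr)
  define g where "g = mvec S (Sd t) f"
  assume "g \<noteq> (\<lambda>_. 0)"
  have "mvec S (b t) g = (\<lambda>_. 0)"
    unfolding g_def mvec_mmul[symmetric] b_commute_Sd by (simp add: mvec_mmul assms(2))
  moreover have "mvec S (adj (d s)) g = (\<lambda>_. 0)" for s
  proof -
    have "mvec S (R t) g = (\<lambda>_. 0)"
      unfolding g_def mvec_mmul[symmetric] by (simp only: flow_normalize mvec_mzero)
    then show ?thesis
      using kernel_R_invariant kernel_R_iff by blast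
  qed
  moreover have "0 < sqnorm S (mvec S (d s) g)" for s
    using mvec_Sd_eq_0_of_kernel_d[of s t f] \<open>g \<noteq> (\<lambda>_. 0)\<close> unfolding g_def
    by (intro sqnorm_pos[OF finite_S mvec_in_vecs]) blast
  ultimately show False
    using b_form_derivative_changes_sign[OF \<open>0 < t\<close>, of g "-1"] by (simp add: sqnorm_def)
qed

lemma kernels_coincide:
  assumes "0 < t"
  shows "kernel S (b t) = kernel S (M t) \<and> kernel S (M t) = kernel S L \<and> kernel S L = kernel S (Vb t)"
proof -
  have "mvec S (b t) f = (\<lambda>_. 0) \<longleftrightarrow> mvec S (M t) f = (\<lambda>_. 0)" for f
    using kernel_b_imp_kernel_R[OF assms] kernel_b_imp_kernel_Sd[OF assms] kernel_M_iff
      kernel_M_iff_kernel_L kernel_L_imp_kernel_b by blast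
  then show ?thesis
    using kernel_M_iff_kernel_L kernel_Vb_iff by (auto simp: kernel_def)
qed

end

section \<open>The exterior derivative of a graph\<close>

lemma simplices_finite: "finite V \<Longrightarrow> finite (simplices V E)"
  by (rule finite_subset[of _ "Pow V"]) (auto simp: simplices_def)

lemma simplices_subset: "x \<in> simplices V E \<Longrightarrow> y \<subseteq> x \<Longrightarrow> y \<noteq> {} \<Longrightarrow> y \<in> simplices V E"
  by (auto simp: simplices_def)

lemma ext_d_face:
  assumes "x \<in> S" "x - {w} \<in> S" "w \<in> x" "finite x"
  shows "ext_d S x (x - {w}) = (-1) ^ card {v\<in>x. v < w}"
proof -
  have "x - (x - {w}) = {w}" using assms(3) by auto
  moreover have "card x > 0" using assms(3,4) card_gt_0_iff by blast
  ultimately show ?thesis using assms by (simp add: ext_d_def card_Diff_singleton)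
qed

lemma ext_d_nonzero_imp_face:
  assumes "ext_d S x y \<noteq> 0"
  shows "\<exists>w\<in>x. y = x - {w}"
proof -
  have "y \<subseteq> x" and c: "card x = card y + 1"
    using assms by (auto simp: ext_d_def split: if_splits)
  then have "finite y"
    using card.infinite finite_subset by fastforce
  then have "card (x - y) = 1"
    using c \<open>y \<subseteq> x\<close> by (simp add: card_Diff_subset)
  then obtain w where "x - y = {w}" by (auto simp: card_Suc_eq)
  then show ?thesis using \<open>y \<subseteq> x\<close> by blast
qed

text \<open>Removing \<open>w\<^sub>1 < w\<^sub>2\<close> in either order yields the signs \<open>(-1)\<^sup>p\<^sup>1 (-1)\<^sup>p\<^sup>2\<^sup>-\<^sup>1\<close> and
  \<open>(-1)\<^sup>p\<^sup>2 (-1)\<^sup>p\<^sup>1\<close>, where \<open>p\<^sub>i\<close> counts the vertices of \<open>x\<close> below \<open>w\<^sub>i\<close>.\<close>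
lemma ext_d_two_faces_cancel:
  assumes S: "S = simplices V E" and x: "x \<in> S" "finite x"
    and w: "w1 \<in> x" "w2 \<in> x" "w1 < w2" "x - {w1, w2} \<noteq> {}"
  shows "ext_d S x (x - {w1}) * ext_d S (x - {w1}) (x - {w1, w2})
    + ext_d S x (x - {w2}) * ext_d S (x - {w2}) (x - {w1, w2}) = 0"
proof -
  have faces: "x - {w1} \<in> S" "x - {w2} \<in> S" "x - {w1, w2} \<in> S"
    using x w unfolding S by (auto intro: simplices_subset)
  have "x - {w1} - {w2} = x - {w1, w2}" "x - {w2} - {w1} = x - {w1, w2}" by auto
  then have "ext_d S (x - {w1}) (x - {w1, w2}) = (-1) ^ card {v \<in> x - {w1}. v < w2}"
    "ext_d S (x - {w2}) (x - {w1, w2}) = (-1) ^ card {v \<in> x - {w2}. v < w1}"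
    using ext_d_face[of "x - {w1}" S w2] ext_d_face[of "x - {w2}" S w1] faces w x by auto
  moreover have "{v\<in>x. v < w2} = insert w1 {v \<in> x - {w1}. v < w2}"
    "{v \<in> x - {w2}. v < w1} = {v\<in>x. v < w1}"
    using w by auto
  ultimately show ?thesis
    using ext_d_face[of x S w1] ext_d_face[of x S w2] faces w x by simp
qed

lemma ext_d_square_simplices:
  assumes "finite V"
  shows "mmul (simplices V E) (ext_d (simplices V E)) (ext_d (simplices V E)) = mzero"
proof (rule mmul_eq_mzeroI)
  let ?S = "simplices V E"
  let ?d = "ext_d ?S"
  fix x z assume "x \<in> ?S" "z \<in> ?S"
  show "mmul ?S ?d ?d x z = 0"
  proof (cases "\<exists>y. ?d x y * ?d y z \<noteq> 0")
    case False
    then have "(\<Sum>y\<in>?S. ?d x y * ?d y z) = 0"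
      by (intro sum.neutral) blast
    then show ?thesis by (simp add: mmul_def)
  next
    case True
    then obtain y0 where "?d x y0 \<noteq> 0" "?d y0 z \<noteq> 0" by auto
    obtain a where "a \<in> x" "y0 = x - {a}"
      using ext_d_nonzero_imp_face[OF \<open>?d x y0 \<noteq> 0\<close>] by blast
    obtain c where "c \<in> y0" "z = y0 - {c}"
      using ext_d_nonzero_imp_face[OF \<open>?d y0 z \<noteq> 0\<close>] by blast
    define w1 where "w1 = min a c"
    define w2 where "w2 = max a c"
    have w: "w1 \<in> x" "w2 \<in> x" "w1 < w2" and z: "z = x - {w1, w2}"
      using \<open>a \<in> x\<close> \<open>y0 = x - {a}\<close> \<open>c \<in> y0\<close> \<open>z = y0 - {c}\<close>
      by (auto simp: w1_def w2_def min_def max_def)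
    have "finite x"
      using \<open>x \<in> ?S\<close> assms by (auto simp: simplices_def intro: finite_subset)
    have "z \<noteq> {}" using \<open>z \<in> ?S\<close> by (simp add: simplices_def)
    have zero: "?d x y * ?d y z = 0" if "y \<notin> {x - {w1}, x - {w2}}" for y
    proof (rule ccontr)
      assume "?d x y * ?d y z \<noteq> 0"
      then obtain w where "w \<in> x" "y = x - {w}"
        using ext_d_nonzero_imp_face by (metis mult_zero_left)
      moreover have "z \<subseteq> y"
        using \<open>?d x y * ?d y z \<noteq> 0\<close> by (auto simp: ext_d_def split: if_splits)
      ultimately have "w \<in> {w1, w2}" using z by auto
      with that \<open>y = x - {w}\<close> show False by auto
    qed
    have "x - {w} \<in> ?S" if "w \<in> {w1, w2}" for w
      by (rule simplices_subset[OF \<open>x \<in> ?S\<close>]) (use \<open>z \<noteq> {}\<close> z that in auto)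
    then have "{x - {w1}, x - {w2}} \<subseteq> ?S" by simp
    then have "mmul ?S ?d ?d x z = (\<Sum>y\<in>{x - {w1}, x - {w2}}. ?d x y * ?d y z)"
      unfolding mmul_def using \<open>x \<in> ?S\<close> \<open>z \<in> ?S\<close>
      by (simp add: sum.mono_neutral_right[OF simplices_finite[OF assms]] zero)
    also have "\<dots> = 0"
      using ext_d_two_faces_cancel[OF refl \<open>x \<in> ?S\<close> \<open>finite x\<close> w] w \<open>z \<noteq> {}\<close> z
      by (auto simp: sum.insert_if)
    finally show ?thesis .
  qed
qed

theorem mainTheorem7:
  fixes V :: "'a::linorder set" and E :: "'a \<Rightarrow> 'a \<Rightarrow> bool"
    and \<beta> :: real and D :: "real \<Rightarrow> 'a op"
  assumes G: "finite_simple_graph V E"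
    and sol: "dirac_deformation (simplices V E) \<beta> D"
  defines "S \<equiv> simplices V E"
  defines "L \<equiv> mmul S (dirac0 S) (dirac0 S)"
  defines "d \<equiv> \<lambda>t. dpart (D t)"
  defines "b \<equiv> \<lambda>t. bpart (D t)"
  defines "C \<equiv> \<lambda>t. madd (d t) (adj (d t))"
  defines "M \<equiv> \<lambda>t. mmul S (C t) (C t)"
  defines "Vb \<equiv> \<lambda>t. mmul S (b t) (b t)"
  defines "R \<equiv> \<lambda>t. mmul S (d t) (adj (d t))"
  defines "Sd \<equiv> \<lambda>t. mmul S (adj (d t)) (d t)"
  shows "\<forall>t. L = madd (M t) (Vb t) \<and> L = madd (madd (R t) (Sd t)) (Vb t)
           \<and> (\<forall>X\<in>{M t, L, Vb t, R t, Sd t}. self_adjoint X)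
           \<and> (\<forall>X\<in>{M t, L, Vb t, R t, Sd t}. \<forall>Y\<in>{M t, L, Vb t, R t, Sd t}.
                  mmul S X Y = mmul S Y X)
           \<and> (\<forall>c. eigenvalue S (M t) c \<longrightarrow> Im c = 0 \<and> Re c \<ge> 0)
           \<and> (\<forall>c. eigenvalue S (Vb t) c \<longrightarrow> Im c = 0 \<and> Re c \<ge> 0)
           \<and> (t > 0 \<longrightarrow> kernel S (b t) = kernel S (M t) \<and> kernel S (M t) = kernel S L
                        \<and> kernel S L = kernel S (Vb t))"
proof -
  have "finite V" using G by (simp add: finite_simple_graph_def)
  interpret F: dirac_flow_cochain "simplices V E" \<beta> D
  proof
    show "finite (simplices V E)" using \<open>finite V\<close> by (rule simplices_finite)
    show "D 0 = dirac0 (simplices V E)"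
      using sol by (simp add: dirac_deformation_def)
    show "((\<lambda>s. D s x y) has_vector_derivative lax_field (simplices V E) \<beta> (D t) x y) (at t)" for t x y
      using sol by (simp add: dirac_deformation_def lax_field_def)
    show "mmul (simplices V E) (ext_d (simplices V E)) (ext_d (simplices V E)) = mzero"
      using \<open>finite V\<close> by (rule ext_d_square_simplices)
  qed
  show ?thesis
    unfolding S_def L_def d_def b_def C_def M_def Vb_def R_def Sd_def
    using F.L_eq_M_Vb F.L_eq_R_Sd_Vb F.self_adjoint_operators F.operators_commute
      F.M_eigenvalue_nonneg F.Vb_eigenvalue_nonneg F.kernels_coincide
    by blast
qed

end
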